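(* Let $r\geq1$ be odd, $m\geq 3$, $n=(r+1)m$, let $u$ be an integer with $\gcd(u,2^m-1)=1$, let $\alpha$ be a primitive element of $\mathbb{F}_{2^{rm}}$, and let $0\leq s,l\leq 2^{rm}-2$ be integers. For $0\le k\le 2^{rm}-2$ let $\Delta_k=\{\alpha^i\mid k\leq i\leq k+2^{rm-1}-1\}$. Let $F\colon\mathbb{F}_{2^{rm}}\times\mathbb{F}_{2^m}\to\mathbb{F}_2$ be the Boolean function with $$\mathrm{supp}(F)=\{(\gamma y^u,y)\mid y\in\mathbb{F}_{2^m}^*,\ \gamma\in\Delta_s\}\cup\{(\gamma,0)\mid\gamma\in\Delta_l\}.$$ Then $F$ is balanced.
   Context: $\mathbb{F}_{2^{rm}}\times\mathbb{F}_{2^m}$ is viewed as an $n$-dimensional $\mathbb{F}_2$-vector space ($\mathbb{F}_{2^m}\subseteq\mathbb{F}_{2^{rm}}$). An $n$-variable Boolean function is balanced if its support has exactly $2^{n-1}$ elements. *)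

theory Defs
  imports Complex_Main
begin

text \<open>The subfield F_(2^m) of a finite field of order 2^(r m), as the set of
  fixed points of the 2^m-th power (Frobenius) map.\<close>
definition subfield2 :: "nat \<Rightarrow> 'a::field set" where
  "subfield2 m = {x. x ^ (2 ^ m) = x}"

definition primitive_element :: "'a::field \<Rightarrow> bool" where
  "primitive_element \<alpha> \<longleftrightarrow> \<alpha> \<noteq> 0 \<and> (\<forall>x. x \<noteq> 0 \<longrightarrow> (\<exists>i::nat. x = \<alpha> ^ i))"

definition Delta :: "'a::field \<Rightarrow> nat \<Rightarrow> nat \<Rightarrow> 'a set" where
  "Delta \<alpha> N k = {\<alpha> ^ i | i. k \<le> i \<and> i \<le> k + 2 ^ (N - 1) - 1}"

text \<open>An n-variable Boolean function f on domain D (with |D| = 2^n) is balanced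
  iff its support has exactly 2^(n-1) elements.\<close>
definition balanced :: "('b \<Rightarrow> bool) \<Rightarrow> 'b set \<Rightarrow> nat \<Rightarrow> bool" where
  "balanced f D n \<longleftrightarrow> card {x \<in> D. f x} = 2 ^ (n - 1)"

end

theory Submission
  imports Defs "HOL-Library.Cardinality"
begin

text \<open>The support is the disjoint union of the image of \<open>\<Delta>\<^sub>s \<times> F\<^sup>*\<close>, with
  \<open>F = \<bbbF>(2^m)\<close>, under \<open>(\<gamma>, y) \<mapsto> (\<gamma> y^u, y)\<close>, which is injective because \<open>y \<noteq> 0\<close>
  and the second coordinate recovers \<open>y\<close>, and of \<open>\<Delta>\<^sub>l \<times> {0}\<close>. Powers of a primitive
  element are distinct along any window shorter than \<open>2^(rm) - 1\<close>, so every \<open>\<Delta>\<^sub>k\<close> has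
  \<open>2^(rm-1)\<close> elements, and the support has \<open>2^(rm-1) (2^m - 1) + 2^(rm-1) = 2^(n-1)\<close>
  elements.\<close>

lemma finite_field_power_card_minus_one:
  fixes x :: "'a::{field,finite}"
  assumes "x \<noteq> 0"
  shows "x ^ (CARD('a) - 1) = 1"
proof -
  have "(\<Prod>y\<in>UNIV-{0}. x * y) = (\<Prod>y\<in>UNIV-{0}. y)"
    by (rule prod.reindex_bij_witness[of _ "\<lambda>y. y / x" "\<lambda>y. x * y"]) (use assms in auto)
  moreover have "(\<Prod>y\<in>UNIV-{0}. x * y) = x ^ (CARD('a) - 1) * (\<Prod>y\<in>UNIV-{0}. y)"
    by (simp add: prod.distrib card_Diff_singleton)
  moreover have "(\<Prod>y\<in>UNIV-{0::'a}. y) \<noteq> 0"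
    by simp
  ultimately show ?thesis
    by simp
qed

lemma power_eq_power_mod:
  fixes x :: "'a::monoid_mult"
  assumes "x ^ n = 1"
  shows "x ^ i = x ^ (i mod n)"
proof -
  have "x ^ i = x ^ (n * (i div n) + i mod n)"
    by simp
  also have "\<dots> = (x ^ n) ^ (i div n) * x ^ (i mod n)"
    by (simp only: power_add power_mult)
  finally show ?thesis
    using assms by simp
qed

lemma card_field_ge_2: "CARD('a::{field,finite}) \<ge> 2"
proof -
  have "card {0, 1::'a} \<le> CARD('a)"
    by (rule card_mono) auto
  then show ?thesis
    by simp
qed

lemma primitive_element_power_eq_iff:
  fixes \<alpha> :: "'a::{field,finite}"
  assumes "primitive_element \<alpha>"
  shows "\<alpha> ^ i = \<alpha> ^ j \<longleftrightarrow> i mod (CARD('a) - 1) = j mod (CARD('a) - 1)"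
proof -
  let ?n = "CARD('a) - 1"
  have "\<alpha> \<noteq> 0"
    using assms by (simp add: primitive_element_def)
  then have order: "\<alpha> ^ ?n = 1"
    by (rule finite_field_power_card_minus_one)
  have n_pos: "?n > 0"
    using card_field_ge_2[where 'a='a] by simp
  have image: "(\<lambda>i. \<alpha> ^ i) ` {..<?n} = UNIV - {0}"
  proof
    show "(\<lambda>i. \<alpha> ^ i) ` {..<?n} \<subseteq> UNIV - {0}"
      using \<open>\<alpha> \<noteq> 0\<close> by auto
    show "UNIV - {0} \<subseteq> (\<lambda>i. \<alpha> ^ i) ` {..<?n}"
    proof
      fix x :: 'a
      assume "x \<in> UNIV - {0}"
      then obtain i where "x = \<alpha> ^ i"
        using assms by (auto simp: primitive_element_def)
      then have "x = \<alpha> ^ (i mod ?n)"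
        using power_eq_power_mod[OF order] by simp
      then show "x \<in> (\<lambda>i. \<alpha> ^ i) ` {..<?n}"
        using n_pos by auto
    qed
  qed
  have "card ((\<lambda>i. \<alpha> ^ i) ` {..<?n}) = card {..<?n}"
    unfolding image by (simp add: card_Diff_singleton)
  then have "inj_on (\<lambda>i. \<alpha> ^ i) {..<?n}"
    by (simp add: eq_card_imp_inj_on)
  then have "\<alpha> ^ (i mod ?n) = \<alpha> ^ (j mod ?n) \<longleftrightarrow> i mod ?n = j mod ?n"
    using n_pos by (simp add: inj_on_eq_iff)
  then show ?thesis
    using power_eq_power_mod[OF order, of i] power_eq_power_mod[OF order, of j] by simp
qed

lemma mod_eq_imp_eq_within_period:
  fixes i j k n :: nat
  assumes "i mod n = j mod n" and "i \<in> {k..<k + n}" and "j \<in> {k..<k + n}"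
  shows "i = j"
proof -
  have eq: "i' = j'" if "i' \<le> j'" "i' mod n = j' mod n" "j' - i' < n" for i' j' :: nat
  proof -
    have "n dvd j' - i'"
      using mod_eq_dvd_iff_nat[OF that(1), of n] that(2)[symmetric] by simp
    then show ?thesis
      using that(1,3) by (auto dest: dvd_imp_le)
  qed
  have "j - i < n" and "i - j < n"
    using assms(2,3) by auto
  show ?thesis
  proof (cases "i \<le> j")
    case True
    then show ?thesis
      using eq[of i j] assms(1) \<open>j - i < n\<close> by simp
  next
    case False
    then show ?thesis
      using eq[of j i] assms(1) \<open>i - j < n\<close> by simp
  qed
qed

lemma card_primitive_element_powers_interval:
  fixes \<alpha> :: "'a::{field,finite}"
  assumes "primitive_element \<alpha>" and "b \<le> CARD('a) - 1"
  shows "card ((\<lambda>i. \<alpha> ^ i) ` {k..<k + b}) = b"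
proof -
  have "inj_on (\<lambda>i. \<alpha> ^ i) {k..<k + b}"
  proof (rule inj_onI)
    fix i j
    assume "i \<in> {k..<k + b}" "j \<in> {k..<k + b}" "\<alpha> ^ i = \<alpha> ^ j"
    then show "i = j"
      using assms mod_eq_imp_eq_within_period[of i "CARD('a) - 1" j k]
      by (auto simp: primitive_element_power_eq_iff)
  qed
  then show ?thesis
    by (simp add: card_image)
qed

lemma card_Delta:
  fixes \<alpha> :: "'a::{field,finite}"
  assumes "primitive_element \<alpha>" and "CARD('a) = 2 ^ N"
  shows "card (Delta \<alpha> N k) = 2 ^ (N - 1)"
proof -
  have "N \<ge> 1"
    using card_field_ge_2[where 'a='a] assms(2) by (cases N) auto
  then have "(2::nat) ^ N = 2 * 2 ^ (N - 1)"
    by (metis Suc_diff_le diff_Suc_1 power_Suc)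
  then have "2 ^ (N - 1) \<le> CARD('a) - 1"
    using assms(2) by simp
  moreover have "Delta \<alpha> N k = (\<lambda>i. \<alpha> ^ i) ` {k..k + 2 ^ (N - 1) - 1}"
    unfolding Delta_def by auto
  moreover have "{k..k + 2 ^ (N - 1) - 1} = {k..<k + 2 ^ (N - 1)}"
    using zero_less_power[of "2::nat" "N - 1"]
    by (intro set_eqI) (simp only: atLeastAtMost_iff atLeastLessThan_iff, linarith)
  ultimately show ?thesis
    by (simp add: card_primitive_element_powers_interval[OF assms(1)])
qed

lemma primitive_element_power_in_subfield2_iff:
  fixes \<alpha> :: "'a::{field,finite}"
  assumes "primitive_element \<alpha>" and "(2 ^ m - 1) dvd (CARD('a) - 1)"
  shows "\<alpha> ^ i \<in> subfield2 m \<longleftrightarrow> (CARD('a) - 1) div (2 ^ m - 1) dvd i"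
proof -
  let ?n = "CARD('a) - 1" and ?c = "2 ^ m - 1 :: nat"
  have "?n > 0"
    using card_field_ge_2[where 'a='a] by simp
  then have "?c > 0"
    using assms(2) by (metis dvd_0_left gr0I)
  have "\<alpha> ^ i \<in> subfield2 m \<longleftrightarrow> \<alpha> ^ (i + i * ?c) = \<alpha> ^ i"
    by (simp add: subfield2_def power_mult[symmetric] algebra_simps)
  also have "\<dots> \<longleftrightarrow> ?n dvd i * ?c"
    using assms(1) mod_eq_dvd_iff_nat[of i "i + i * ?c" ?n]
    by (simp add: primitive_element_power_eq_iff)
  also have "\<dots> \<longleftrightarrow> ?n div ?c dvd i"
    using div_dvd_iff_mult[of ?c ?n i] assms(2) \<open>?c > 0\<close> by simp
  finally show ?thesis .
qed

lemma card_subfield2_nonzero: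
  fixes \<alpha> :: "'a::{field,finite}"
  assumes "primitive_element \<alpha>" and "(2 ^ m - 1) dvd (CARD('a) - 1)"
  shows "card (subfield2 m - {0::'a}) = 2 ^ m - 1"
proof -
  let ?n = "CARD('a) - 1" and ?c = "2 ^ m - 1 :: nat"
  define d where "d = ?n div ?c"
  have "?n > 0"
    using card_field_ge_2[where 'a='a] by simp
  have n_eq: "?n = d * ?c"
    using assms(2) by (simp add: d_def)
  then have "d > 0"
    using \<open>?n > 0\<close> by (metis mult_0 neq0_conv)
  have mem: "\<alpha> ^ i \<in> subfield2 m \<longleftrightarrow> d dvd i" for i
    unfolding d_def by (rule primitive_element_power_in_subfield2_iff[OF assms])
  have eq_iff: "\<alpha> ^ i = \<alpha> ^ j \<longleftrightarrow> i mod ?n = j mod ?n" for i j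
    using assms(1) by (rule primitive_element_power_eq_iff)
  have "subfield2 m - {0} = (\<lambda>j. \<alpha> ^ (d * j)) ` {..<?c}"
  proof
    show "subfield2 m - {0} \<subseteq> (\<lambda>j. \<alpha> ^ (d * j)) ` {..<?c}"
    proof
      fix x :: 'a
      assume x: "x \<in> subfield2 m - {0}"
      then obtain i where "x = \<alpha> ^ i"
        using assms(1) by (auto simp: primitive_element_def)
      then have x_eq: "x = \<alpha> ^ (i mod ?n)"
        using eq_iff by simp
      then have "d dvd i mod ?n"
        using x mem[of "i mod ?n"] by simp
      then obtain j where j: "i mod ?n = d * j" ..
      have "d * j < d * ?c"
        using \<open>?n > 0\<close> n_eq j by (metis mod_less_divisor)
      then show "x \<in> (\<lambda>j. \<alpha> ^ (d * j)) ` {..<?c}"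
        using x_eq j by auto
    qed
    show "(\<lambda>j. \<alpha> ^ (d * j)) ` {..<?c} \<subseteq> subfield2 m - {0}"
      using mem assms(1) by (auto simp: primitive_element_def)
  qed
  moreover have "inj_on (\<lambda>j. \<alpha> ^ (d * j)) {..<?c}"
  proof (rule inj_onI)
    fix i j
    assume "i \<in> {..<?c}" "j \<in> {..<?c}" and power_eq: "\<alpha> ^ (d * i) = \<alpha> ^ (d * j)"
    have "(d * i) mod ?n = (d * j) mod ?n"
      using power_eq eq_iff by simp
    moreover have "d * i < ?n" and "d * j < ?n"
      using \<open>i \<in> {..<?c}\<close> \<open>j \<in> {..<?c}\<close> n_eq \<open>d > 0\<close> by simp_all
    ultimately have "d * i = d * j"
      by simp
    then show "i = j"
      using \<open>d > 0\<close> by simp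
  qed
  ultimately show ?thesis
    by (simp add: card_image)
qed

lemma card_twisted_graph_Un_axis:
  fixes D D' E :: "'a::field set" and u :: int
  assumes "finite D" and "finite D'" and "finite E" and "0 \<notin> E"
  shows "card ({(\<gamma> * y powi u, y) | \<gamma> y. y \<in> E \<and> \<gamma> \<in> D} \<union> {(\<gamma>, 0) | \<gamma>. \<gamma> \<in> D'})
           = card D * card E + card D'"
proof -
  let ?twist = "\<lambda>(\<gamma>, y). (\<gamma> * y powi u, y)"
  have graph: "{(\<gamma> * y powi u, y) | \<gamma> y. y \<in> E \<and> \<gamma> \<in> D} = ?twist ` (D \<times> E)"
    by auto
  have "inj_on ?twist (D \<times> E)"
    using assms(4) by (intro inj_onI) (auto simp: power_int_not_zero)
  then have "card (?twist ` (D \<times> E)) = card D * card E"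
    by (simp add: card_image card_cartesian_product)
  moreover have "card {(\<gamma>, 0::'a) | \<gamma>. \<gamma> \<in> D'} = card D'"
    using card_image[of "\<lambda>\<gamma>. (\<gamma>, 0::'a)" D'] by (simp add: inj_on_def setcompr_eq_image)
  moreover have "?twist ` (D \<times> E) \<inter> {(\<gamma>, 0) | \<gamma>. \<gamma> \<in> D'} = {}"
    using assms(4) by auto
  ultimately show ?thesis
    unfolding graph using assms(1-3) by (simp add: card_Un_disjoint)
qed

lemma two_power_minus_one_dvd: "(2 ^ m - 1 :: nat) dvd 2 ^ (k * m) - 1"
proof (induction k)
  case 0
  then show ?case by simp
next
  case (Suc k)
  have "(2::nat) ^ (Suc k * m) - 1 = 2 ^ m * (2 ^ (k * m) - 1) + (2 ^ m - 1)"
    by (simp add: power_add algebra_simps diff_mult_distrib2)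
  then show ?case
    using Suc.IH by (metis dvd_add dvd_mult dvd_refl)
qed

theorem theorem3:
  fixes r m s l :: nat and u :: int and \<alpha> :: "'a::{field,finite}"
    and F :: "'a \<times> 'a \<Rightarrow> bool"
  assumes "odd r" and "r \<ge> 1" and "m \<ge> 3"
    and "card (UNIV :: 'a set) = 2 ^ (r * m)"
    and "gcd u (2 ^ m - 1) = 1"
    and "primitive_element \<alpha>"
    and "s \<le> 2 ^ (r * m) - 2" and "l \<le> 2 ^ (r * m) - 2"
    and "\<And>p. p \<in> UNIV \<times> subfield2 m \<Longrightarrow> F p \<longleftrightarrow>
           p \<in> {(\<gamma> * y powi u, y) | \<gamma> y. y \<in> subfield2 m - {0} \<and> \<gamma> \<in> Delta \<alpha> (r * m) s}
             \<union> {(\<gamma>, 0) | \<gamma>. \<gamma> \<in> Delta \<alpha> (r * m) l}"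
  shows "balanced F (UNIV \<times> subfield2 m) ((r + 1) * m)"
proof -
  let ?S = "{(\<gamma> * y powi u, y) | \<gamma> y. y \<in> subfield2 m - {0} \<and> \<gamma> \<in> Delta \<alpha> (r * m) s}
             \<union> {(\<gamma>, 0) | \<gamma>. \<gamma> \<in> Delta \<alpha> (r * m) l}"
  have card_nonzero: "card (subfield2 m - {0::'a}) = 2 ^ m - 1"
    using card_subfield2_nonzero[OF assms(6)] two_power_minus_one_dvd[of m r] assms(4)
    by (simp add: mult.commute)
  have "card ?S = card (Delta \<alpha> (r * m) s) * card (subfield2 m - {0::'a}) + card (Delta \<alpha> (r * m) l)"
    by (rule card_twisted_graph_Un_axis) simp_all
  also have "\<dots> = 2 ^ (r * m - 1) * (2 ^ m - 1) + 2 ^ (r * m - 1)"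
    by (simp only: card_Delta[OF assms(6,4)] card_nonzero)
  also have "\<dots> = 2 ^ ((r + 1) * m - 1)"
    using assms(2,3) by (simp add: power_add[symmetric] algebra_simps)
  moreover have "{p \<in> UNIV \<times> subfield2 m. F p} = ?S"
    using assms(9) by (auto simp: subfield2_def)
  ultimately show ?thesis
    unfolding balanced_def by simp
qed

end
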